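(* Let $B$ be a connected building set on $[n]$ and write $F(P_B)=\sum_{\alpha\models n}\zeta_\alpha(B)M_\alpha$. Then $$\sum_{\alpha\models n}(-1)^{k(\alpha)}\zeta_\alpha(B)=(-1)^nf_0(P_B),$$ where $f_0(P_B)$ is the number of vertices of $P_B$. Equivalently, if $\chi(P_B,m)=\sum_{\alpha\models n}\zeta_\alpha(B)\binom{m}{k(\alpha)}$ (a polynomial in $m$), then $\chi(P_B,-1)=(-1)^nf_0(P_B)$.
   Context: A building set on a finite set $V$ is a collection $B$ of nonempty subsets of $V$ such that $\{v\}\in B$ for all $v\in V$ and such that $I,J\in B$, $I\cap J\neq\emptyset$ imply $I\cup J\in B$; it is connected if $V\in B$. The nestohedron of $B$ is $P_B=\sum_{I\in B}\mathrm{Conv}\{e_i: i\in I\}\subset\mathbb{R}^V$. For a convex polytope $Q\subset\mathbb{R}^n$, $f:[n]\to\mathbb{N}=\{1,2,\dots\}$ is $Q$-generic if $x\mapsto\sum_i f(i)x_i$ attains its maximum over $Q$ at a unique point, and $F(Q)=\sum_{f\ Q\text{-generic}}x_{f(1)}\cdots x_{f(n)}$. For a composition $\alpha=(a_1,\dots,a_k)\models n$ of length $k(\alpha)=k$, $M_\alpha=\sum_{i_1<\dots<i_k}x_{i_1}^{a_1}\cdots x_{i_k}^{a_k}$. *)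

theory Defs
  imports "HOL-Analysis.Analysis"
begin

text \<open>The ground set [n] is modelled by a finite type 'n with n = CARD('n);
  points of R^[n] are vectors of type real^'n, and e_i = axis i 1.\<close>

definition building_set :: "'n set set \<Rightarrow> bool" where
  "building_set B \<longleftrightarrow>
     (\<forall>I\<in>B. I \<noteq> {}) \<and> (\<forall>v. {v} \<in> B) \<and>
     (\<forall>I\<in>B. \<forall>J\<in>B. I \<inter> J \<noteq> {} \<longrightarrow> I \<union> J \<in> B)"

definition connected_building_set :: "('n::finite) set set \<Rightarrow> bool" where
  "connected_building_set B \<longleftrightarrow> building_set B \<and> UNIV \<in> B"

definition nestohedron :: "('n::finite) set set \<Rightarrow> (real^'n) set" where
  "nestohedron B = {x. \<exists>p. (\<forall>I\<in>B. p I \<in> convex hull ((\<lambda>i. axis i (1::real)) ` I))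
                         \<and> x = (\<Sum>I\<in>B. p I)}"

definition generic :: "(real^'n) set \<Rightarrow> ('n \<Rightarrow> nat) \<Rightarrow> bool" where
  "generic Q f \<longleftrightarrow> (\<forall>i. 1 \<le> f i) \<and>
     (\<exists>!x. x \<in> Q \<and> (\<forall>y\<in>Q. (\<Sum>i\<in>UNIV. real (f i) * y $ i) \<le> (\<Sum>i\<in>UNIV. real (f i) * x $ i)))"

text \<open>Coefficient of the monomial prod_j x_j^(e j) in F(Q)
  = sum over Q-generic f of x_{f(1)} ... x_{f(n)}.\<close>
definition F_coeff :: "(real^'n::finite) set \<Rightarrow> (nat \<Rightarrow> nat) \<Rightarrow> nat" where
  "F_coeff Q e = card {f :: 'n \<Rightarrow> nat. generic Q f \<and> (\<forall>j. card {i. f i = j} = e j)}"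

text \<open>Compositions of n: lists of positive integers summing to n; k(alpha) = length alpha.\<close>
definition compositions :: "nat \<Rightarrow> nat list set" where
  "compositions n = {\<alpha>. (\<forall>a\<in>set \<alpha>. 0 < a) \<and> sum_list \<alpha> = n}"

text \<open>Coefficient of the monomial prod_j x_j^(e j) (variables x_1, x_2, ...) in M_alpha.\<close>
definition M_coeff :: "nat list \<Rightarrow> (nat \<Rightarrow> nat) \<Rightarrow> int" where
  "M_coeff \<alpha> e = (if \<exists>is. length is = length \<alpha> \<and> sorted_wrt (<) is \<and> (\<forall>i\<in>set is. 1 \<le> i)
                        \<and> (\<forall>t<length \<alpha>. e (is ! t) = \<alpha> ! t)
                        \<and> (\<forall>j. j \<notin> set is \<longrightarrow> e j = 0)
                   then 1 else 0)"

definition num_vertices :: "(real^'n::finite) set \<Rightarrow> nat" where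
  "num_vertices P = card {v. v extreme_point_of P}"

end

theory Submission
  imports Defs
begin

text \<open>Extracting the coefficient of x_1^a_1 ... x_k^a_k shows that zeta_alpha counts the generic f
  whose fibres over 1, ..., k have sizes a_1, ..., a_k, so the left-hand side is the sum of (-1)^k
  over the generic f with range {1..k}.
  A linear functional has a unique maximiser on the nestohedron exactly when it has a strict
  maximum G(I) on every I in B, and the maximiser is then the sum of the e_G(I). So the generic f
  maximised at a fixed vertex are the ordered set partitions of [n] placing each G(I) in a higher
  block than the rest of I. For any acyclic relation the signed count of compatible ordered set
  partitions is (-1)^n: the top block ranges over the nonempty sets of sources, which gives a
  recursion whose inner alternating sum is -1; summing over the vertices gives the theorem.\<close>

section \<open>Unique maximisers of linear functionals\<close>

definition unique_maximizer :: "'a::real_inner set \<Rightarrow> 'a \<Rightarrow> 'a \<Rightarrow> bool" where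
  "unique_maximizer P w v \<longleftrightarrow> v \<in> P \<and> (\<forall>x\<in>P. x \<noteq> v \<longrightarrow> w \<bullet> x < w \<bullet> v)"

lemma unique_maximizer_unique:
  "unique_maximizer P w v \<Longrightarrow> unique_maximizer P w v' \<Longrightarrow> v = v'"
  unfolding unique_maximizer_def using less_asym by blast

lemma unique_maximizer_imp_extreme_point:
  assumes "unique_maximizer P w v"
  shows "v extreme_point_of P"
  unfolding extreme_point_of_def
proof (intro conjI ballI)
  show "v \<in> P" using assms by (simp add: unique_maximizer_def)
  fix a b assume a: "a \<in> P" and b: "b \<in> P"
  show "v \<notin> open_segment a b"
  proof
    assume "v \<in> open_segment a b"
    then obtain u where u: "0 < u" "u < 1" and v: "v = (1 - u) *\<^sub>R a + u *\<^sub>R b"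
      and "a \<noteq> b" by (auto simp: in_segment)
    then have "a \<noteq> v \<or> b \<noteq> v" by auto
    moreover have "w \<bullet> a \<le> w \<bullet> v" "w \<bullet> b \<le> w \<bullet> v"
      using assms a b by (auto simp: unique_maximizer_def less_imp_le)
    ultimately have "w \<bullet> a < w \<bullet> v \<or> w \<bullet> b < w \<bullet> v"
      using assms a b by (auto simp: unique_maximizer_def)
    then have "(1 - u) * (w \<bullet> a) + u * (w \<bullet> b) < (1 - u) * (w \<bullet> v) + u * (w \<bullet> v)"
      using \<open>w \<bullet> a \<le> w \<bullet> v\<close> \<open>w \<bullet> b \<le> w \<bullet> v\<close> u
      by (auto intro: add_less_le_mono add_le_less_mono mult_strict_left_mono mult_left_mono)
    moreover have "w \<bullet> v = (1 - u) * (w \<bullet> a) + u * (w \<bullet> b)"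
      by (simp add: v inner_add_right)
    ultimately show False by (simp add: algebra_simps)
  qed
qed

lemma polytope_extreme_point_imp_unique_maximizer:
  fixes P :: "'a::euclidean_space set"
  assumes "polytope P" "v extreme_point_of P"
  obtains w where "unique_maximizer P w v"
proof -
  have "{v} face_of P" using assms(2) by (simp add: face_of_singleton)
  then have "{v} exposed_face_of P"
    using exposed_face_of_polyhedron[OF polytope_imp_polyhedron[OF assms(1)]] by blast
  then obtain w b where le: "P \<subseteq> {x. w \<bullet> x \<le> b}" and eq: "{v} = P \<inter> {x. w \<bullet> x = b}"
    unfolding exposed_face_of_def by blast
  have "v \<in> P" "w \<bullet> v = b" using eq by auto
  moreover have "w \<bullet> x < b" if "x \<in> P" "x \<noteq> v" for x
    using le eq that by (metis (mono_tags) IntI mem_Collect_eq order_le_less singletonD subsetD)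
  ultimately have "unique_maximizer P w v"
    unfolding unique_maximizer_def by simp
  then show ?thesis by (rule that)
qed

definition weight :: "('n \<Rightarrow> nat) \<Rightarrow> real^'n" where
  "weight f = (\<chi> i. real (f i))"

lemma generic_iff_unique_maximizer:
  "generic Q f \<longleftrightarrow> (\<forall>i. 1 \<le> f i) \<and> (\<exists>v. unique_maximizer Q (weight f) v)"
proof -
  have dot: "(\<Sum>i\<in>UNIV. real (f i) * y $ i) = weight f \<bullet> y" for y
    by (simp add: weight_def inner_vec_def)
  have "(\<exists>!x. x \<in> Q \<and> (\<forall>y\<in>Q. weight f \<bullet> y \<le> weight f \<bullet> x))
        \<longleftrightarrow> (\<exists>v. unique_maximizer Q (weight f) v)"
  proof
    assume "\<exists>!x. x \<in> Q \<and> (\<forall>y\<in>Q. weight f \<bullet> y \<le> weight f \<bullet> x)"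
    then obtain v where v: "v \<in> Q" "\<forall>y\<in>Q. weight f \<bullet> y \<le> weight f \<bullet> v"
      and uniq: "\<And>x. x \<in> Q \<Longrightarrow> \<forall>y\<in>Q. weight f \<bullet> y \<le> weight f \<bullet> x \<Longrightarrow> x = v"
      by blast
    have "weight f \<bullet> x < weight f \<bullet> v" if "x \<in> Q" "x \<noteq> v" for x
      using v uniq[of x] that by fastforce
    then show "\<exists>v. unique_maximizer Q (weight f) v"
      using v unfolding unique_maximizer_def by blast
  next
    assume "\<exists>v. unique_maximizer Q (weight f) v"
    then obtain v where "unique_maximizer Q (weight f) v" ..
    then show "\<exists>!x. x \<in> Q \<and> (\<forall>y\<in>Q. weight f \<bullet> y \<le> weight f \<bullet> x)"
      unfolding unique_maximizer_def by (metis less_le_not_le nle_le)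
  qed
  then show ?thesis by (simp add: generic_def dot)
qed

section \<open>Linear functionals on the nestohedron\<close>

lemma convex_hull_axis_coordinates:
  fixes y :: "real^'n"
  assumes "y \<in> convex hull ((\<lambda>i. axis i 1) ` I)"
  shows "\<forall>i. 0 \<le> y $ i" "\<forall>i. i \<notin> I \<longrightarrow> y $ i = 0" "(\<Sum>i\<in>UNIV. y $ i) = 1"
proof -
  define \<Delta> :: "(real^'n) set" where
    "\<Delta> = {y. (\<forall>i. 0 \<le> y $ i) \<and> (\<forall>i. i \<notin> I \<longrightarrow> y $ i = 0) \<and> (\<Sum>i\<in>UNIV. y $ i) = 1}"
  have "convex \<Delta>"
    unfolding \<Delta>_def convex_def
    by (auto simp: sum.distrib simp flip: sum_distrib_left)
  moreover have "(\<lambda>i. axis i 1) ` I \<subseteq> \<Delta>"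
    by (auto simp: \<Delta>_def axis_def sum.delta)
  ultimately have "convex hull ((\<lambda>i. axis i 1) ` I) \<subseteq> \<Delta>"
    by (rule hull_minimal[rotated])
  then show "\<forall>i. 0 \<le> y $ i" "\<forall>i. i \<notin> I \<longrightarrow> y $ i = 0" "(\<Sum>i\<in>UNIV. y $ i) = 1"
    using assms unfolding \<Delta>_def by blast+
qed

lemma inner_convex_hull_axis_le:
  fixes w y :: "real^'n"
  assumes "y \<in> convex hull ((\<lambda>i. axis i 1) ` I)" and "\<forall>i\<in>I. w $ i \<le> m"
  shows "w \<bullet> y \<le> m"
proof -
  note y = convex_hull_axis_coordinates[OF assms(1)]
  have "w \<bullet> y = (\<Sum>i\<in>UNIV. w $ i * y $ i)" by (simp add: inner_vec_def)
  also have "\<dots> \<le> (\<Sum>i\<in>UNIV. m * y $ i)"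
    using y(1,2) assms(2) by (intro sum_mono) (metis mult_eq_0_iff mult_right_mono order_refl)
  also have "\<dots> = m" using y(3) by (simp flip: sum_distrib_left)
  finally show ?thesis .
qed

lemma convex_hull_axis_max_unique:
  fixes w y :: "real^'n"
  assumes y: "y \<in> convex hull ((\<lambda>i. axis i 1) ` I)" and "g \<in> I"
    and strict: "\<forall>j\<in>I. j \<noteq> g \<longrightarrow> w $ j < w $ g" and ge: "w $ g \<le> w \<bullet> y"
  shows "y = axis g 1"
proof -
  note coords = convex_hull_axis_coordinates[OF y]
  have nonneg: "0 \<le> (w $ g - w $ i) * y $ i" for i
    using coords(1,2) strict by (cases "i \<in> I"; cases "i = g") (auto intro: less_imp_le)
  have "(\<Sum>i\<in>UNIV. (w $ g - w $ i) * y $ i) = w $ g - w \<bullet> y"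
    using coords(3) by (simp add: inner_vec_def left_diff_distrib sum_subtractf flip: sum_distrib_left)
  moreover have "0 \<le> (\<Sum>i\<in>UNIV. (w $ g - w $ i) * y $ i)"
    using nonneg by (rule sum_nonneg)
  ultimately have "(\<Sum>i\<in>UNIV. (w $ g - w $ i) * y $ i) = 0"
    using ge by linarith
  then have zero: "(w $ g - w $ i) * y $ i = 0" for i
    using nonneg by (subst (asm) sum_nonneg_eq_0_iff) auto
  have off: "y $ i = 0" if "i \<noteq> g" for i
  proof (cases "i \<in> I")
    case True
    then have "w $ g - w $ i \<noteq> 0" using strict that by force
    then show ?thesis using zero[of i] by simp
  qed (use coords(2) in blast)
  then have "y $ g = 1"
    using coords(3) sum.remove[of UNIV g "\<lambda>i. y $ i"] by simp
  then show ?thesis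
    using off by (auto simp: vec_eq_iff axis_def)
qed

definition selects_strict_max :: "'n set set \<Rightarrow> real^'n \<Rightarrow> ('n set \<Rightarrow> 'n) \<Rightarrow> bool" where
  "selects_strict_max B w G \<longleftrightarrow> (\<forall>I\<in>B. G I \<in> I \<and> (\<forall>j\<in>I. j \<noteq> G I \<longrightarrow> w $ j < w $ G I))"

definition selection_point :: "'n set set \<Rightarrow> ('n set \<Rightarrow> 'n) \<Rightarrow> real^'n" where
  "selection_point B G = (\<Sum>I\<in>B. axis (G I) 1)"

lemma nestohedron_eq_set_sum:
  "nestohedron B = (\<Sum>I\<in>B. convex hull ((\<lambda>i. axis i 1) ` I))"
  by (subst set_sum_alt) (auto simp: nestohedron_def)

lemma polytope_nestohedron: "polytope (nestohedron B)"
proof -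
  have "nestohedron B = convex hull (\<Sum>I\<in>B. (\<lambda>i. axis i 1) ` I)"
    by (simp add: nestohedron_eq_set_sum convex_hull_set_sum)
  moreover have "finite (\<Sum>I\<in>B. (\<lambda>i. axis i (1::real)) ` I)"
    by (intro finite_set_sum) auto
  ultimately show ?thesis unfolding polytope_def by blast
qed

lemma selection_point_in_nestohedron:
  "\<forall>I\<in>B. G I \<in> I \<Longrightarrow> selection_point B G \<in> nestohedron B"
  unfolding nestohedron_def selection_point_def
  by (rule CollectI, rule exI[of _ "\<lambda>I. axis (G I) 1"]) (auto intro: hull_inc)

lemma inner_selection_point: "w \<bullet> selection_point B G = (\<Sum>I\<in>B. w $ G I)"
  by (simp add: selection_point_def inner_sum_right inner_axis)

lemma unique_maximizer_selection_point:
  assumes sel: "selects_strict_max B w G"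
  shows "unique_maximizer (nestohedron B) w (selection_point B G)"
  unfolding unique_maximizer_def
proof (intro conjI ballI impI)
  show "selection_point B G \<in> nestohedron B"
    using sel by (intro selection_point_in_nestohedron) (simp add: selects_strict_max_def)
  fix x assume "x \<in> nestohedron B" and ne: "x \<noteq> selection_point B G"
  then obtain p where p: "\<forall>I\<in>B. p I \<in> convex hull ((\<lambda>i. axis i 1) ` I)" and x: "x = (\<Sum>I\<in>B. p I)"
    unfolding nestohedron_def by blast
  have le: "w \<bullet> p I \<le> w $ G I" if "I \<in> B" for I
  proof (rule inner_convex_hull_axis_le)
    show "p I \<in> convex hull ((\<lambda>i. axis i 1) ` I)" using p that by blast
    show "\<forall>i\<in>I. w $ i \<le> w $ G I"
      using sel that unfolding selects_strict_max_def by (metis order_le_less)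
  qed
  have "x = selection_point B G" if "\<forall>I\<in>B. p I = axis (G I) 1"
    unfolding x selection_point_def using that by (intro sum.cong) auto
  then obtain I where I: "I \<in> B" "p I \<noteq> axis (G I) 1"
    using ne by blast
  have "\<not> w $ G I \<le> w \<bullet> p I"
    using convex_hull_axis_max_unique[of "p I" I "G I" w] sel p I
    unfolding selects_strict_max_def by auto
  then have "w \<bullet> p I < w $ G I" by simp
  then have "(\<Sum>I\<in>B. w \<bullet> p I) < (\<Sum>I\<in>B. w $ G I)"
    using le I(1) by (intro sum_strict_mono_ex1[OF finite]) blast+
  then show "w \<bullet> x < w \<bullet> selection_point B G"
    by (simp add: x inner_sum_right inner_selection_point)
qed

text \<open>Distinct selections may share their selection point, but not with a strict-maximum selection.\<close>
lemma selection_point_eq_imp_selection_eq: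
  assumes sel: "selects_strict_max B w G" and mem: "\<forall>I\<in>B. G' I \<in> I"
    and eq: "selection_point B G' = selection_point B G" and "I \<in> B"
  shows "G' I = G I"
proof (rule ccontr)
  assume "G' I \<noteq> G I"
  have less: "w $ G' K < w $ G K" if "K \<in> B" "G' K \<noteq> G K" for K
    using sel mem that unfolding selects_strict_max_def by blast
  then have "w $ G' K \<le> w $ G K" if "K \<in> B" for K
    using that by (cases "G' K = G K") (auto intro: less_imp_le)
  then have "(\<Sum>K\<in>B. w $ G' K) < (\<Sum>K\<in>B. w $ G K)"
    using less \<open>I \<in> B\<close> \<open>G' I \<noteq> G I\<close> by (intro sum_strict_mono_ex1[OF finite]) blast+
  then show False
    using eq inner_selection_point[of w B G] inner_selection_point[of w B G'] by simp
qed

lemma ex_selection_of_maxima: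
  fixes w :: "real^'n"
  assumes "\<forall>I\<in>B. I \<noteq> {}"
  obtains G where "\<forall>I\<in>B. G I \<in> I \<and> (\<forall>j\<in>I. w $ j \<le> w $ G I)"
proof -
  have "\<exists>g\<in>I. \<forall>j\<in>I. w $ j \<le> w $ g" if "I \<in> B" for I
  proof -
    have "Max ((\<lambda>j. w $ j) ` I) \<in> (\<lambda>j. w $ j) ` I"
      using assms that by (intro Max_in) auto
    then obtain g where g: "g \<in> I" "w $ g = Max ((\<lambda>j. w $ j) ` I)" by auto
    have "\<forall>j\<in>I. w $ j \<le> w $ g" unfolding g(2) by (auto intro: Max_ge)
    with g(1) show ?thesis by blast
  qed
  then show ?thesis using that by metis
qed

lemma unique_maximizer_eq_selection_point:
  assumes um: "unique_maximizer (nestohedron B) w v"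
    and G: "\<forall>I\<in>B. G I \<in> I \<and> (\<forall>j\<in>I. w $ j \<le> w $ G I)"
  shows "selection_point B G = v"
proof (rule ccontr)
  obtain p where p: "\<forall>I\<in>B. p I \<in> convex hull ((\<lambda>i. axis i 1) ` I)" and v: "v = (\<Sum>I\<in>B. p I)"
    using um unfolding unique_maximizer_def nestohedron_def by blast
  assume "selection_point B G \<noteq> v"
  then have "w \<bullet> selection_point B G < w \<bullet> v"
    using um G selection_point_in_nestohedron unfolding unique_maximizer_def by blast
  moreover have "w \<bullet> v \<le> w \<bullet> selection_point B G"
    unfolding v inner_sum_right inner_selection_point
    using p G by (intro sum_mono inner_convex_hull_axis_le) auto
  ultimately show False by simp
qed

lemma selection_point_fun_upd:
  assumes "I \<in> B"
  shows "selection_point B (G(I := j)) - selection_point B G = axis j 1 - axis (G I) 1"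
proof -
  have "selection_point B H = (\<Sum>K\<in>B - {I}. axis (G K) 1) + axis (H I) 1"
    if "\<forall>K\<in>B - {I}. H K = G K" for H
    unfolding selection_point_def sum.remove[OF finite assms]
    using that by (simp add: add.commute)
  from this[of "G(I := j)"] this[of G] show ?thesis by simp
qed

lemma unique_maximizer_nestohedron_imp_selects_strict_max:
  assumes nonempty: "\<forall>I\<in>B. I \<noteq> {}" and um: "unique_maximizer (nestohedron B) w v"
  obtains G where "selects_strict_max B w G" "v = selection_point B G"
proof -
  obtain G where G: "\<forall>I\<in>B. G I \<in> I \<and> (\<forall>j\<in>I. w $ j \<le> w $ G I)"
    using ex_selection_of_maxima[OF nonempty] by blast
  have "w $ j < w $ G I" if "I \<in> B" "j \<in> I" "j \<noteq> G I" for I j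
  proof (rule ccontr)
    assume "\<not> w $ j < w $ G I"
    moreover have "w $ j \<le> w $ G I" using G that by blast
    ultimately have "w $ j = w $ G I" by linarith
    then have "\<forall>K\<in>B. (G(I := j)) K \<in> K \<and> (\<forall>i\<in>K. w $ i \<le> w $ (G(I := j)) K)"
      using G that by auto
    then have "selection_point B (G(I := j)) = selection_point B G"
      using unique_maximizer_eq_selection_point[OF um] G by simp
    then have "axis j (1::real) = axis (G I) 1"
      using selection_point_fun_upd[OF \<open>I \<in> B\<close>, of G j] by simp
    then show False
      using \<open>j \<noteq> G I\<close> by (simp add: axis_eq_axis)
  qed
  then show ?thesis
    using that G unique_maximizer_eq_selection_point[OF um G] unfolding selects_strict_max_def by blast
qed

section \<open>Ordered set partitions compatible with an acyclic relation\<close>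

text \<open>A packed f encodes the ordered set partition of S into the nonempty blocks f^-1(1), ...,
  f^-1(k); a strict packing puts b in a lower block than a whenever (a, b) is in R.\<close>
definition packed_on :: "'a set \<Rightarrow> ('a \<Rightarrow> nat) \<Rightarrow> bool" where
  "packed_on S f \<longleftrightarrow> (\<forall>i. i \<notin> S \<longrightarrow> f i = 0) \<and> f ` S = {1..card (f ` S)}"

definition top_block :: "'a set \<Rightarrow> ('a \<Rightarrow> nat) \<Rightarrow> 'a set" where
  "top_block S f = {i \<in> S. f i = card (f ` S)}"

lemma packed_on_remove_top_block:
  assumes f: "packed_on S f" and T: "top_block S f = T" "T \<noteq> {}"
  defines "h \<equiv> \<lambda>i. if i \<in> T then 0 else f i"
  shows "packed_on (S - T) h" "card (f ` S) = Suc (card (h ` (S - T)))"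
proof -
  define k where "k = card (f ` S)"
  have fS: "f ` S = {1..k}" and out: "\<forall>i. i \<notin> S \<longrightarrow> f i = 0"
    using f unfolding packed_on_def k_def by blast+
  have top: "i \<in> T \<longleftrightarrow> f i = k" if "i \<in> S" for i
    using T(1) that unfolding top_block_def k_def by blast
  have "T \<subseteq> S" using T(1) unfolding top_block_def by blast
  obtain t where "t \<in> T" using T(2) by blast
  then have "k \<in> f ` S" using top \<open>T \<subseteq> S\<close> by (metis image_eqI subsetD)
  then have "k \<ge> 1" using fS by simp
  have "f ` (S - T) = f ` S - {k}"
  proof (intro equalityI subsetI)
    fix y assume "y \<in> f ` (S - T)"
    then obtain i where "i \<in> S" "i \<notin> T" "y = f i" by blast
    then show "y \<in> f ` S - {k}" using top by simp
  next
    fix y assume "y \<in> f ` S - {k}"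
    then obtain i where "i \<in> S" "y = f i" "f i \<noteq> k" by blast
    then show "y \<in> f ` (S - T)" using top by simp
  qed
  then have "f ` (S - T) = {1..k - 1}"
    using fS \<open>k \<ge> 1\<close> by auto
  moreover have "h ` (S - T) = f ` (S - T)" by (auto simp: h_def)
  ultimately have "h ` (S - T) = {1..k - 1}" by simp
  then show "packed_on (S - T) h" "card (f ` S) = Suc (card (h ` (S - T)))"
    using out \<open>k \<ge> 1\<close> unfolding packed_on_def k_def[symmetric] by (auto simp: h_def)
qed

lemma packed_on_add_top_block:
  assumes h: "packed_on (S - T) h" and T: "T \<subseteq> S" "T \<noteq> {}"
  defines "f \<equiv> \<lambda>i. if i \<in> T then Suc (card (h ` (S - T))) else h i"
  shows "packed_on S f" "top_block S f = T"
proof -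
  define k where "k = card (h ` (S - T))"
  have hS: "h ` (S - T) = {1..k}" and out: "\<forall>i. i \<notin> S - T \<longrightarrow> h i = 0"
    using h unfolding packed_on_def k_def by blast+
  have "f ` S = h ` (S - T) \<union> f ` T" using T(1) by (auto simp: f_def)
  also have "f ` T = {Suc k}" using T by (auto simp: f_def k_def)
  finally have fS: "f ` S = {1..Suc k}" using hS by auto
  then show "packed_on S f"
    using out T(1) unfolding packed_on_def k_def[symmetric] by (auto simp: f_def)
  have top: "i \<in> T" if "i \<in> S" "f i = Suc k" for i
  proof (rule ccontr)
    assume "i \<notin> T"
    then have "h i \<in> {1..k}" using hS \<open>i \<in> S\<close> by blast
    then show False using \<open>i \<notin> T\<close> \<open>f i = Suc k\<close> by (simp add: f_def)
  qed
  moreover have "f i = Suc k" if "i \<in> T" for i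
    using that by (simp add: f_def k_def)
  moreover have "card (f ` S) = Suc k" using fS by simp
  ultimately show "top_block S f = T"
    using T(1) unfolding top_block_def by auto
qed

definition strict_packings :: "('a \<times> 'a) set \<Rightarrow> 'a set \<Rightarrow> ('a \<Rightarrow> nat) set" where
  "strict_packings R S = {f. packed_on S f \<and> (\<forall>a\<in>S. \<forall>b\<in>S. (a, b) \<in> R \<longrightarrow> f b < f a)}"

definition sources :: "('a \<times> 'a) set \<Rightarrow> 'a set \<Rightarrow> 'a set" where
  "sources R S = {x \<in> S. \<forall>y\<in>S. (y, x) \<notin> R}"

lemma finite_strict_packings:
  assumes "finite S" shows "finite (strict_packings R S)"
proof (rule finite_subset)
  show "strict_packings R S \<subseteq> {f. \<forall>x. (x \<in> S \<longrightarrow> f x \<in> {..card S}) \<and> (x \<notin> S \<longrightarrow> f x = 0)}"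
  proof (intro subsetI CollectI allI conjI impI)
    fix f x assume f: "f \<in> strict_packings R S"
    then show "x \<notin> S \<Longrightarrow> f x = 0" for x by (simp add: strict_packings_def packed_on_def)
    assume "x \<in> S"
    then have "f x \<le> card (f ` S)"
      using f by (auto simp: strict_packings_def packed_on_def)
    also have "\<dots> \<le> card S" using assms by (rule card_image_le)
    finally show "f x \<in> {..card S}" by simp
  qed
  show "finite {f. \<forall>x. (x \<in> S \<longrightarrow> f x \<in> {..card S}) \<and> (x \<notin> S \<longrightarrow> (f x :: nat) = 0)}"
    using assms by (intro finite_set_of_finite_funs) auto
qed

lemma top_block_strict_packing:
  assumes f: "f \<in> strict_packings R S" and "finite S" "S \<noteq> {}"
  shows "top_block S f \<in> Pow (sources R S) - {{}}"
proof -
  have fS: "f ` S = {1..card (f ` S)}" using f by (simp add: strict_packings_def packed_on_def)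
  have "card (f ` S) \<in> f ` S"
    using assms(2,3) by (subst fS) (simp add: Suc_le_eq card_gt_0_iff)
  then have "top_block S f \<noteq> {}" by (auto simp: top_block_def)
  moreover have "(y, x) \<notin> R" if "x \<in> top_block S f" "y \<in> S" for x y
  proof
    assume "(y, x) \<in> R"
    moreover have "x \<in> S" using that(1) by (simp add: top_block_def)
    ultimately have "f x < f y" using f \<open>y \<in> S\<close> by (simp add: strict_packings_def)
    moreover have "f y \<le> card (f ` S)" using fS \<open>y \<in> S\<close> by (metis atLeastAtMost_iff image_eqI)
    ultimately show False using that by (simp add: top_block_def)
  qed
  ultimately show ?thesis by (auto simp: sources_def top_block_def)
qed

lemma strict_packings_add_top_block:
  assumes h: "h \<in> strict_packings R (S - T)" and T: "T \<subseteq> sources R S" "T \<noteq> {}"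
  defines "f \<equiv> \<lambda>i. if i \<in> T then Suc (card (h ` (S - T))) else h i"
  shows "f \<in> strict_packings R S" "top_block S f = T"
proof -
  have packed: "packed_on (S - T) h"
    and dec: "\<forall>a\<in>S - T. \<forall>b\<in>S - T. (a, b) \<in> R \<longrightarrow> h b < h a"
    using h by (auto simp: strict_packings_def)
  have "T \<subseteq> S" using T(1) by (auto simp: sources_def)
  note add = packed_on_add_top_block[OF packed \<open>T \<subseteq> S\<close> T(2), folded f_def]
  have "h ` (S - T) = {1..card (h ` (S - T))}" using packed by (simp add: packed_on_def)
  then have bound: "h b \<le> card (h ` (S - T))" if "b \<in> S - T" for b
    using that by (metis atLeastAtMost_iff image_eqI)
  have "f b < f a" if "a \<in> S" "b \<in> S" "(a, b) \<in> R" for a b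
  proof -
    have "b \<notin> T" using T(1) that by (auto simp: sources_def)
    then show ?thesis
      using bound[of b] dec that by (cases "a \<in> T") (auto simp: f_def)
  qed
  then show "f \<in> strict_packings R S"
    using add(1) by (auto simp: strict_packings_def)
  show "top_block S f = T" by (rule add(2))
qed

lemma sum_strict_packings_top_block:
  assumes T: "T \<subseteq> sources R S" "T \<noteq> {}"
  shows "(\<Sum>f\<in>{f \<in> strict_packings R S. top_block S f = T}. (-1::int) ^ card (f ` S))
         = - (\<Sum>h\<in>strict_packings R (S - T). (-1) ^ card (h ` (S - T)))"
proof -
  define restr where "restr f = (\<lambda>i. if i \<in> T then 0 else f i)" for f :: "'a \<Rightarrow> nat"
  define extend where "extend h = (\<lambda>i. if i \<in> T then Suc (card (h ` (S - T))) else h i)"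
    for h :: "'a \<Rightarrow> nat"
  show ?thesis
  proof (subst sum_negf[symmetric], rule sum.reindex_bij_witness[where i = extend and j = restr])
    fix f assume "f \<in> {f \<in> strict_packings R S. top_block S f = T}"
    then have f: "packed_on S f" "top_block S f = T"
      and dec: "\<forall>a\<in>S. \<forall>b\<in>S. (a, b) \<in> R \<longrightarrow> f b < f a"
      by (auto simp: strict_packings_def)
    note rem = packed_on_remove_top_block[OF f T(2), folded restr_def]
    show "restr f \<in> strict_packings R (S - T)"
      using rem(1) dec by (auto simp: strict_packings_def restr_def)
    show "extend (restr f) = f"
    proof
      fix i show "extend (restr f) i = f i"
      proof (cases "i \<in> T")
        case True
        then have "f i = card (f ` S)" using f(2) by (auto simp: top_block_def)
        then show ?thesis using True rem(2) by (simp add: extend_def)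
      qed (simp add: extend_def restr_def)
    qed
    show "- ((-1) ^ card (restr f ` (S - T))) = (-1::int) ^ card (f ` S)"
      using rem(2) by simp
  next
    fix h assume h: "h \<in> strict_packings R (S - T)"
    show "extend h \<in> {f \<in> strict_packings R S. top_block S f = T}"
      using strict_packings_add_top_block[OF h T, folded extend_def] by simp
    show "restr (extend h) = h"
      using h by (auto simp: restr_def extend_def strict_packings_def packed_on_def)
  qed
qed

lemma sum_nonempty_subsets_neg_one_pow_card:
  assumes "finite M" "M \<noteq> {}"
  shows "(\<Sum>T\<in>Pow M - {{}}. (-1::int) ^ card T) = -1"
proof -
  have "(\<Sum>T\<in>Pow M. (-1::int) ^ card T) = 0"
  proof (rule sum_alternating_cancels)
    show "finite (Pow M)" using assms(1) by simp
    show "card {T \<in> Pow M. even (card T)} = card {T \<in> Pow M. odd (card T)}"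
      using card_subsupersets_even_odd[of M "{}"] assms by auto
  qed
  then show ?thesis
    using sum.remove[of "Pow M" "{}" "\<lambda>T. (-1::int) ^ card T"] assms(1) by simp
qed

lemma sources_nonempty:
  fixes g :: "'a \<Rightarrow> 'b::linorder"
  assumes "finite S" "S \<noteq> {}" and acyclic: "\<forall>(a, b)\<in>R. g b < g a"
  shows "sources R S \<noteq> {}"
proof -
  have "Max (g ` S) \<in> g ` S" using assms(1,2) by (intro Max_in) auto
  then obtain x where x: "x \<in> S" "g x = Max (g ` S)" by auto
  then have "(y, x) \<notin> R" if "y \<in> S" for y
    using acyclic that assms(1) by (metis (mono_tags) Max_ge case_prodD finite_imageI image_eqI leD)
  then show ?thesis using x(1) by (auto simp: sources_def)
qed

theorem sum_strict_packings:
  fixes R :: "('a \<times> 'a) set" and g :: "'a \<Rightarrow> 'b::linorder"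
  assumes "finite S" and acyclic: "\<forall>(a, b)\<in>R. g b < g a"
  shows "(\<Sum>f\<in>strict_packings R S. (-1::int) ^ card (f ` S)) = (-1) ^ card S"
  using assms(1)
proof (induction S rule: finite_psubset_induct)
  case (psubset S)
  show ?case
  proof (cases "S = {}")
    case True
    then have "strict_packings R S = {\<lambda>_. 0}"
      by (auto simp: strict_packings_def packed_on_def)
    then show ?thesis using True by simp
  next
    case False
    define M where "M = sources R S"
    have "finite M" using psubset.hyps by (simp add: M_def sources_def)
    have "M \<noteq> {}" unfolding M_def using psubset.hyps False acyclic by (rule sources_nonempty)
    have fiber: "(\<Sum>f\<in>{f \<in> strict_packings R S. top_block S f = T}. (-1::int) ^ card (f ` S))
                 = - ((-1) ^ card S * (-1) ^ card T)" if T: "T \<in> Pow M - {{}}" for T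
    proof -
      have "T \<subseteq> S" using T by (auto simp: M_def sources_def)
      then have "S - T \<subset> S" using T by blast
      then have "(\<Sum>h\<in>strict_packings R (S - T). (-1::int) ^ card (h ` (S - T)))
                 = (-1) ^ (card S - card T)"
        using psubset.IH \<open>T \<subseteq> S\<close> psubset.hyps by (simp add: card_Diff_subset finite_subset)
      also have "\<dots> = (-1) ^ card S * (-1) ^ card T"
        using card_mono[OF psubset.hyps \<open>T \<subseteq> S\<close>]
        by (simp flip: neg_one_power_add_eq_neg_one_power_diff add: power_add)
      finally show ?thesis
        using sum_strict_packings_top_block[of T R S] T by (simp add: M_def)
    qed
    have "(\<Sum>f\<in>strict_packings R S. (-1::int) ^ card (f ` S))
          = (\<Sum>T\<in>Pow M - {{}}. \<Sum>f\<in>{f \<in> strict_packings R S. top_block S f = T}. (-1) ^ card (f ` S))"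
      using top_block_strict_packing[OF _ psubset.hyps False] \<open>finite M\<close>
      by (intro sum.group[symmetric] finite_strict_packings psubset.hyps) (auto simp: M_def)
    also have "\<dots> = - ((-1) ^ card S * (\<Sum>T\<in>Pow M - {{}}. (-1) ^ card T))"
      by (simp add: fiber sum_negf sum_distrib_left)
    also have "(\<Sum>T\<in>Pow M - {{}}. (-1::int) ^ card T) = -1"
      using \<open>finite M\<close> \<open>M \<noteq> {}\<close> by (rule sum_nonempty_subsets_neg_one_pow_card)
    finally show ?thesis by simp
  qed
qed

section \<open>Coefficients in the monomial quasisymmetric basis\<close>

text \<open>The exponent vector of x_1^a_1 ... x_k^a_k, the only monomial of M_alpha supported on {1..k}.\<close>
definition monomial_exponents :: "nat list \<Rightarrow> nat \<Rightarrow> nat" where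
  "monomial_exponents \<alpha> j = (if 1 \<le> j \<and> j \<le> length \<alpha> then \<alpha> ! (j - 1) else 0)"

lemma length_le_sum_list_pos: "\<forall>a\<in>set xs. 0 < (a::nat) \<Longrightarrow> length xs \<le> sum_list xs"
  by (induction xs) auto

lemma finite_compositions: "finite (compositions (n::nat))"
proof (rule finite_subset)
  show "compositions n \<subseteq> {xs. set xs \<subseteq> {..n} \<and> length xs \<le> n}"
    by (auto simp: compositions_def member_le_sum_list length_le_sum_list_pos)
  show "finite {xs. set xs \<subseteq> {..n} \<and> length xs \<le> n}"
    by (rule finite_lists_length_le) simp
qed

lemma monomial_exponents_pos_iff:
  "\<forall>a\<in>set \<alpha>. 0 < a \<Longrightarrow> 0 < monomial_exponents \<alpha> j \<longleftrightarrow> j \<in> {1..length \<alpha>}"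
  by (auto simp: monomial_exponents_def)

lemma M_coeff_monomial_exponents:
  assumes \<alpha>: "\<forall>a\<in>set \<alpha>. 0 < a" and \<beta>: "\<forall>a\<in>set \<beta>. 0 < a"
  shows "M_coeff \<beta> (monomial_exponents \<alpha>) = (if \<beta> = \<alpha> then 1 else 0)"
proof -
  let ?e = "monomial_exponents \<alpha>"
  let ?fits = "\<lambda>is. length is = length \<beta> \<and> sorted_wrt (<) is \<and> (\<forall>i\<in>set is. 1 \<le> i)
                 \<and> (\<forall>t<length \<beta>. ?e (is ! t) = \<beta> ! t) \<and> (\<forall>j. j \<notin> set is \<longrightarrow> ?e j = 0)"
  have "(\<exists>is. ?fits is) \<longleftrightarrow> \<beta> = \<alpha>"
  proof
    assume "\<exists>is. ?fits is"
    then obtain "is" where len: "length is = length \<beta>" and srt: "sorted_wrt (<) is"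
      and val: "\<forall>t<length \<beta>. ?e (is ! t) = \<beta> ! t" and out: "\<forall>j. j \<notin> set is \<longrightarrow> ?e j = 0"
      by blast
    have "0 < ?e i" if "i \<in> set is" for i
    proof -
      obtain t where t: "t < length \<beta>" "i = is ! t"
        using \<open>i \<in> set is\<close> len by (metis in_set_conv_nth)
      then have "?e i = \<beta> ! t" using val by blast
      moreover have "\<beta> ! t \<in> set \<beta>" using t(1) by (rule nth_mem)
      ultimately show ?thesis using \<beta> by simp
    qed
    moreover have "j \<in> set is" if "0 < ?e j" for j
      using out that by (metis less_irrefl)
    ultimately have "set is = {1..length \<alpha>}"
      using monomial_exponents_pos_iff[OF \<alpha>] by blast
    moreover have "sorted is" "distinct is" using srt by (simp_all add: strict_sorted_iff)
    ultimately have "is = [1..<Suc (length \<alpha>)]"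
      by (intro sorted_distinct_set_unique) (simp_all add: atLeastLessThanSuc_atLeastAtMost del: upt_Suc)
    then show "\<beta> = \<alpha>"
      using len val by (intro nth_equalityI) (auto simp: monomial_exponents_def simp del: upt_Suc)
  next
    assume "\<beta> = \<alpha>"
    then have "?fits [1..<Suc (length \<alpha>)]"
      by (auto simp: monomial_exponents_def simp del: upt_Suc)
    then show "\<exists>is. ?fits is" ..
  qed
  then show ?thesis by (simp add: M_coeff_def)
qed

lemma coefficient_extraction:
  assumes expansion: "\<forall>e. int (F_coeff Q e) = (\<Sum>\<beta>\<in>compositions n. \<zeta> \<beta> * M_coeff \<beta> e)"
    and \<alpha>: "\<alpha> \<in> compositions n"
  shows "\<zeta> \<alpha> = int (F_coeff Q (monomial_exponents \<alpha>))"
proof -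
  have "(\<Sum>\<beta>\<in>compositions n. \<zeta> \<beta> * M_coeff \<beta> (monomial_exponents \<alpha>))
        = (\<Sum>\<beta>\<in>compositions n. if \<beta> = \<alpha> then \<zeta> \<beta> else 0)"
    using \<alpha> by (intro sum.cong) (auto simp: M_coeff_monomial_exponents compositions_def)
  also have "\<dots> = \<zeta> \<alpha>" using \<alpha> finite_compositions by (simp add: sum.delta')
  finally show ?thesis using expansion by simp
qed

definition block_sizes :: "('n \<Rightarrow> nat) \<Rightarrow> nat list" where
  "block_sizes f = map (\<lambda>j. card {i. f i = j}) [1..<Suc (card (range f))]"

lemma length_block_sizes [simp]: "length (block_sizes f) = card (range f)"
  by (simp add: block_sizes_def)

lemma packed_on_UNIV: "packed_on UNIV f \<longleftrightarrow> range f = {1..card (range f)}"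
  by (simp add: packed_on_def)

lemma finite_packed_on_UNIV: "finite {f :: 'n::finite \<Rightarrow> nat. packed_on UNIV f \<and> P f}"
  by (rule finite_subset[OF _ finite_strict_packings[of UNIV "{}"]])
     (auto simp: strict_packings_def)

lemma block_sizes_in_compositions:
  fixes f :: "'n::finite \<Rightarrow> nat"
  assumes "packed_on UNIV f"
  shows "block_sizes f \<in> compositions CARD('n)"
proof -
  have range: "range f = {1..<Suc (card (range f))}"
    using assms by (simp add: packed_on_UNIV atLeastLessThanSuc_atLeastAtMost)
  have "0 < card {i. f i = j}" if "j \<in> range f" for j
    using that by (auto simp: card_gt_0_iff)
  then have "\<forall>a\<in>set (block_sizes f). 0 < a"
    by (subst (asm) range) (auto simp: block_sizes_def simp del: upt_Suc)
  moreover have "sum_list (block_sizes f) = (\<Sum>j\<in>range f. card {i. f i = j})"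
    by (subst range) (simp add: block_sizes_def sum_list_distinct_conv_sum_set del: upt_Suc)
  moreover have "(\<Sum>j\<in>range f. card {i. f i = j}) = CARD('n)"
    using sum.group[of UNIV "range f" f "\<lambda>_. 1::nat"] by simp
  ultimately show ?thesis by (simp add: compositions_def)
qed

lemma card_fiber_pos_iff: "0 < card {i. (f :: 'n::finite \<Rightarrow> 'b) i = j} \<longleftrightarrow> j \<in> range f"
  by (auto simp: card_gt_0_iff)

lemma multiplicities_eq_monomial_exponents_iff:
  fixes f :: "'n::finite \<Rightarrow> nat"
  assumes \<alpha>: "\<forall>a\<in>set \<alpha>. 0 < a"
  shows "(\<forall>j. card {i. f i = j} = monomial_exponents \<alpha> j) \<longleftrightarrow> packed_on UNIV f \<and> block_sizes f = \<alpha>"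
proof
  assume mult: "\<forall>j. card {i. f i = j} = monomial_exponents \<alpha> j"
  have "j \<in> range f \<longleftrightarrow> j \<in> {1..length \<alpha>}" for j
    using mult monomial_exponents_pos_iff[OF \<alpha>, of j] card_fiber_pos_iff[of f j] by simp
  then have range: "range f = {1..length \<alpha>}" by blast
  then have "block_sizes f = map (monomial_exponents \<alpha>) [1..<Suc (length \<alpha>)]"
    using mult by (simp add: block_sizes_def del: upt_Suc)
  also have "\<dots> = \<alpha>"
    by (intro nth_equalityI) (auto simp: monomial_exponents_def simp del: upt_Suc)
  finally show "packed_on UNIV f \<and> block_sizes f = \<alpha>"
    using range by (simp add: packed_on_UNIV)
next
  assume "packed_on UNIV f \<and> block_sizes f = \<alpha>"
  then have range: "range f = {1..card (range f)}" and bs: "block_sizes f = \<alpha>"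
    by (simp_all add: packed_on_UNIV)
  have len: "length \<alpha> = card (range f)" using bs by auto
  show "\<forall>j. card {i. f i = j} = monomial_exponents \<alpha> j"
  proof
    fix j show "card {i. f i = j} = monomial_exponents \<alpha> j"
    proof (cases "j \<in> range f")
      case True
      then show ?thesis
        using range len by (auto simp: monomial_exponents_def bs[symmetric] block_sizes_def nth_upt
            simp del: upt_Suc)
    next
      case False
      then show ?thesis
        using range len monomial_exponents_pos_iff[OF \<alpha>, of j] card_fiber_pos_iff[of f j] by auto
    qed
  qed
qed

lemma sum_compositions_eq_sum_packed:
  fixes P :: "('n::finite \<Rightarrow> nat) \<Rightarrow> bool"
  shows "(\<Sum>\<alpha>\<in>compositions CARD('n).
            (-1) ^ length \<alpha> * int (card {f. P f \<and> (\<forall>j. card {i. f i = j} = monomial_exponents \<alpha> j)}))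
         = (\<Sum>f | packed_on UNIV f \<and> P f. (-1) ^ card (range f))"
proof -
  let ?Packed = "{f. packed_on UNIV f \<and> P f}"
  have "block_sizes ` ?Packed \<subseteq> compositions CARD('n)"
    using block_sizes_in_compositions by blast
  then have "(\<Sum>f\<in>?Packed. (-1::int) ^ card (range f))
        = (\<Sum>\<alpha>\<in>compositions CARD('n). \<Sum>f\<in>{f \<in> ?Packed. block_sizes f = \<alpha>}. (-1) ^ card (range f))"
    by (rule sum.group[OF finite_packed_on_UNIV finite_compositions, symmetric])
  also have "\<dots> = (\<Sum>\<alpha>\<in>compositions CARD('n).
      (-1) ^ length \<alpha> * int (card {f. P f \<and> (\<forall>j. card {i. f i = j} = monomial_exponents \<alpha> j)}))"
  proof (rule sum.cong[OF refl])
    fix \<alpha> assume "\<alpha> \<in> compositions CARD('n)"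
    then have "{f \<in> ?Packed. block_sizes f = \<alpha>}
               = {f. P f \<and> (\<forall>j. card {i. f i = j} = monomial_exponents \<alpha> j)}"
      using multiplicities_eq_monomial_exponents_iff by (auto simp: compositions_def)
    moreover have "(\<Sum>f\<in>{f \<in> ?Packed. block_sizes f = \<alpha>}. (-1::int) ^ card (range f))
               = (\<Sum>f\<in>{f \<in> ?Packed. block_sizes f = \<alpha>}. (-1) ^ length \<alpha>)"
      by (intro sum.cong) auto
    ultimately show "(\<Sum>f\<in>{f \<in> ?Packed. block_sizes f = \<alpha>}. (-1::int) ^ card (range f))
      = (-1) ^ length \<alpha> * int (card {f. P f \<and> (\<forall>j. card {i. f i = j} = monomial_exponents \<alpha> j)})"
      by simp
  qed
  finally show ?thesis by simp
qed

section \<open>Generic weights grouped by vertex\<close>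

definition selection_relation :: "'n set set \<Rightarrow> ('n set \<Rightarrow> 'n) \<Rightarrow> ('n \<times> 'n) set" where
  "selection_relation B G = {(G I, j) | I j. I \<in> B \<and> j \<in> I \<and> j \<noteq> G I}"

lemma selects_strict_max_iff_selection_relation:
  "selects_strict_max B w G \<longleftrightarrow> (\<forall>I\<in>B. G I \<in> I) \<and> (\<forall>(a, b)\<in>selection_relation B G. w $ b < w $ a)"
  unfolding selects_strict_max_def selection_relation_def by blast

lemma unique_maximizer_selection_point_iff:
  assumes nonempty: "\<forall>I\<in>B. I \<noteq> {}" and G: "\<forall>I\<in>B. G I \<in> I"
  shows "unique_maximizer (nestohedron B) w (selection_point B G) \<longleftrightarrow> selects_strict_max B w G"
proof
  assume "unique_maximizer (nestohedron B) w (selection_point B G)"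
  then obtain G' where G': "selects_strict_max B w G'" "selection_point B G = selection_point B G'"
    using unique_maximizer_nestohedron_imp_selects_strict_max[OF nonempty] by blast
  then have "G I = G' I" if "I \<in> B" for I
    using selection_point_eq_imp_selection_eq[OF G'(1)] G that by blast
  then show "selects_strict_max B w G"
    using G'(1) unfolding selects_strict_max_def by simp
qed (rule unique_maximizer_selection_point)

lemma packed_on_UNIV_pos: "packed_on UNIV f \<Longrightarrow> 1 \<le> f i"
  unfolding packed_on_UNIV by (metis atLeastAtMost_iff rangeI)

lemma sum_packed_vertex_fiber:
  fixes B :: "('n::finite) set set"
  assumes nonempty: "\<forall>I\<in>B. I \<noteq> {}" and v: "v extreme_point_of nestohedron B"
  shows "(\<Sum>f | packed_on UNIV f \<and> unique_maximizer (nestohedron B) (weight f) v.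
            (-1::int) ^ card (range f)) = (-1) ^ CARD('n)"
proof -
  obtain w where "unique_maximizer (nestohedron B) w v"
    using polytope_extreme_point_imp_unique_maximizer[OF polytope_nestohedron v] .
  then obtain G where G: "selects_strict_max B w G" and v: "v = selection_point B G"
    using unique_maximizer_nestohedron_imp_selects_strict_max[OF nonempty] by blast
  have G_mem: "\<forall>I\<in>B. G I \<in> I" using G by (simp add: selects_strict_max_def)
  have "{f. packed_on UNIV f \<and> unique_maximizer (nestohedron B) (weight f) v}
        = strict_packings (selection_relation B G) UNIV"
    unfolding v unique_maximizer_selection_point_iff[OF nonempty G_mem]
      selects_strict_max_iff_selection_relation strict_packings_def
    using G_mem by (auto simp: weight_def)
  moreover have "(\<Sum>f\<in>strict_packings (selection_relation B G) UNIV. (-1::int) ^ card (f ` UNIV))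
                 = (-1) ^ CARD('n)"
    using G by (intro sum_strict_packings[where g = "\<lambda>i. w $ i"])
      (auto simp: selects_strict_max_iff_selection_relation)
  ultimately show ?thesis by simp
qed

lemma sum_generic_packed:
  fixes B :: "('n::finite) set set"
  assumes nonempty: "\<forall>I\<in>B. I \<noteq> {}"
  shows "(\<Sum>f | packed_on UNIV f \<and> generic (nestohedron B) f. (-1::int) ^ card (range f))
         = (-1) ^ CARD('n) * int (num_vertices (nestohedron B))"
proof -
  let ?P = "nestohedron B"
  let ?V = "{v. v extreme_point_of ?P}"
  let ?fiber = "\<lambda>v. {f. packed_on UNIV f \<and> unique_maximizer ?P (weight f) v}"
  have "finite ?V"
    using finite_polyhedron_extreme_points polytope_imp_polyhedron polytope_nestohedron by blast
  have "{f. packed_on UNIV f \<and> generic ?P f} = (\<Union>v\<in>?V. ?fiber v)"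
  proof (intro equalityI subsetI)
    fix f assume "f \<in> {f. packed_on UNIV f \<and> generic ?P f}"
    then obtain v where "packed_on UNIV f" "unique_maximizer ?P (weight f) v"
      by (auto simp: generic_iff_unique_maximizer)
    then show "f \<in> (\<Union>v\<in>?V. ?fiber v)"
      using unique_maximizer_imp_extreme_point by blast
  next
    fix f assume "f \<in> (\<Union>v\<in>?V. ?fiber v)"
    then show "f \<in> {f. packed_on UNIV f \<and> generic ?P f}"
      using packed_on_UNIV_pos by (auto simp: generic_iff_unique_maximizer)
  qed
  moreover have "\<forall>v\<in>?V. \<forall>v'\<in>?V. v \<noteq> v' \<longrightarrow> ?fiber v \<inter> ?fiber v' = {}"
    using unique_maximizer_unique by blast
  then have "(\<Sum>f\<in>(\<Union>v\<in>?V. ?fiber v). (-1::int) ^ card (range f))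
             = (\<Sum>v\<in>?V. \<Sum>f\<in>?fiber v. (-1) ^ card (range f))"
    using \<open>finite ?V\<close> finite_packed_on_UNIV by (intro sum.UNION_disjoint) auto
  ultimately have "(\<Sum>f | packed_on UNIV f \<and> generic ?P f. (-1::int) ^ card (range f))
                   = (\<Sum>v\<in>?V. \<Sum>f\<in>?fiber v. (-1) ^ card (range f))"
    by simp
  also have "\<dots> = (\<Sum>v\<in>?V. (-1) ^ CARD('n))"
    using sum_packed_vertex_fiber[OF nonempty] by simp
  finally show ?thesis by (simp add: num_vertices_def)
qed

theorem mainTheorem8:
  fixes B :: "('n::finite) set set" and \<zeta> :: "nat list \<Rightarrow> int"
  assumes "connected_building_set B"
    and "\<forall>e. int (F_coeff (nestohedron B) e) =
               (\<Sum>\<alpha>\<in>compositions CARD('n). \<zeta> \<alpha> * M_coeff \<alpha> e)"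
  shows "(\<Sum>\<alpha>\<in>compositions CARD('n). (-1) ^ length \<alpha> * \<zeta> \<alpha>)
           = (-1) ^ CARD('n) * int (num_vertices (nestohedron B))"
proof -
  have nonempty: "\<forall>I\<in>B. I \<noteq> {}"
    using assms(1) by (simp add: connected_building_set_def building_set_def)
  have "(\<Sum>\<alpha>\<in>compositions CARD('n). (-1) ^ length \<alpha> * \<zeta> \<alpha>)
        = (\<Sum>\<alpha>\<in>compositions CARD('n). (-1) ^ length \<alpha> *
             int (card {f. generic (nestohedron B) f \<and> (\<forall>j. card {i. f i = j} = monomial_exponents \<alpha> j)}))"
    using coefficient_extraction[OF assms(2)] by (intro sum.cong) (simp_all add: F_coeff_def)
  also have "\<dots> = (\<Sum>f | packed_on UNIV f \<and> generic (nestohedron B) f. (-1) ^ card (range f))"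
    by (rule sum_compositions_eq_sum_packed)
  also have "\<dots> = (-1) ^ CARD('n) * int (num_vertices (nestohedron B))"
    by (rule sum_generic_packed[OF nonempty])
  finally show ?thesis .
qed

end
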